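(* Let $(X,\Sigma,\mu)$ be a measure space, $n,l\ge1$, $\mathbb{F}\in\{\mathbb{R},\mathbb{C}\}$, $(X_j)_{j\in[1,l]}$ a partition of $X$ into measurable subsets, $h\in L^2(X,\mu;\mathbb{F})$, and define $W:L^2(X,\mu;\mathbb{F}^n)\to\prod_{j\in[1,l]}\mathbb{F}^n$ by $W(F)=\big(\int_{X_j}h(x)f_x\,d\mu(x)\big)_{j\in[1,l]}$. Let $D\in\prod_{j\in[1,l]}\mathbb{F}^n$ be such that $W^{-1}(\{D\})$ contains a continuous frame. Then $\mathcal{F}^{\mathbb{F}}_{(X,\mu),n}\cap W^{-1}(\{D\})$ is dense in $W^{-1}(\{D\})$ (for the norm of $L^2(X,\mu;\mathbb{F}^n)$).
   Context: A family $\Phi=(\varphi_x)_{x\in X}$ in $\mathbb{F}^n$ (with measurable coordinates) is a continuous frame indexed by $(X,\mu)$ if there are $0<A\le B$ with $A\|v\|^2\le\int_X|\langle v,\varphi_x\rangle|^2d\mu(x)\le B\|v\|^2$ for all $v\in\mathbb{F}^n$. $\mathcal{F}^{\mathbb{F}}_{(X,\mu),n}$ denotes the set of such frames, viewed as a subset of $L^2(X,\mu;\mathbb{F}^n)$ (equivalently, the elements of $L^2(X,\mu;\mathbb{F}^n)$ whose coordinate functions are linearly independent in $L^2(X,\mu;\mathbb{F})$). *)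

theory Defs
  imports "HOL-Analysis.Analysis"
begin

text \<open>Definitions are generic in the
scalar type 'f and take the conjugation map cj (id for real, cnj for complex), so
that the standard inner product on F^n is  v . w = sum_i v_i * cj (w_i).\<close>

definition fn_inner :: "('f::real_normed_field \<Rightarrow> 'f) \<Rightarrow> 'f^'n \<Rightarrow> 'f^'n \<Rightarrow> 'f" where
  "fn_inner cj v w = (\<Sum>i\<in>UNIV. v $ i * cj (w $ i))"

definition L2vec :: "'a measure \<Rightarrow> ('a \<Rightarrow> 'f::{real_normed_field,second_countable_topology}^'n) set" where
  "L2vec M = {F. (\<forall>i. (\<lambda>x. F x $ i) \<in> borel_measurable M) \<and>
                 (\<integral>\<^sup>+x. ennreal ((norm (F x))\<^sup>2) \<partial>M) < \<infinity>}"

definition L2scal :: "'a measure \<Rightarrow> ('a \<Rightarrow> 'f::{real_normed_field,second_countable_topology}) set" where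
  "L2scal M = {h. h \<in> borel_measurable M \<and> (\<integral>\<^sup>+x. ennreal ((norm (h x))\<^sup>2) \<partial>M) < \<infinity>}"

definition cont_frame :: "('f::{real_normed_field,second_countable_topology} \<Rightarrow> 'f) \<Rightarrow> 'a measure \<Rightarrow> ('a \<Rightarrow> 'f^'n) \<Rightarrow> bool" where
  "cont_frame cj M \<phi> \<longleftrightarrow> (\<forall>i. (\<lambda>x. \<phi> x $ i) \<in> borel_measurable M) \<and>
     (\<exists>A B. 0 < A \<and> A \<le> B \<and>
        (\<forall>v::'f^'n. ennreal (A * (norm v)\<^sup>2) \<le> (\<integral>\<^sup>+x. ennreal ((norm (fn_inner cj v (\<phi> x)))\<^sup>2) \<partial>M) \<and>
                   (\<integral>\<^sup>+x. ennreal ((norm (fn_inner cj v (\<phi> x)))\<^sup>2) \<partial>M) \<le> ennreal (B * (norm v)\<^sup>2)))"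

text \<open>The map W(F) = (int_{X_j} h(x) f_x dmu(x))_{j in [1,l]}, with the index set
[1,l] represented as {0..<l}; the integral is taken coordinatewise.\<close>
definition Wmap :: "'a measure \<Rightarrow> (nat \<Rightarrow> 'a set) \<Rightarrow> ('a \<Rightarrow> 'f::{real_normed_field,banach,second_countable_topology})
                    \<Rightarrow> ('a \<Rightarrow> 'f^'n) \<Rightarrow> nat \<Rightarrow> 'f^'n" where
  "Wmap M P h F j = (\<chi> i. set_lebesgue_integral M (P j) (\<lambda>x. h x * F x $ i))"

definition Wpre :: "'a measure \<Rightarrow> (nat \<Rightarrow> 'a set) \<Rightarrow> nat \<Rightarrow> ('a \<Rightarrow> 'f::{real_normed_field,banach,second_countable_topology})
                    \<Rightarrow> (nat \<Rightarrow> 'f^'n) \<Rightarrow> ('a \<Rightarrow> 'f^'n) set" where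
  "Wpre M P l h D = {F \<in> L2vec M. \<forall>j<l. Wmap M P h F j = D j}"

definition L2_dense_in :: "'a measure \<Rightarrow> ('a \<Rightarrow> 'f::real_normed_field^'n) set \<Rightarrow> ('a \<Rightarrow> 'f^'n) set \<Rightarrow> bool" where
  "L2_dense_in M S T \<longleftrightarrow> S \<subseteq> T \<and> (\<forall>F\<in>T. \<forall>\<epsilon>>0. \<exists>G\<in>S.
       (\<integral>\<^sup>+x. ennreal ((norm (F x - G x))\<^sup>2) \<partial>M) < ennreal (\<epsilon>\<^sup>2))"

end

theory Submission
  imports Defs "HOL-Computational_Algebra.Polynomial"
begin

text \<open>The map W is linear, so together with F and a frame \<Phi> the whole line
F + t (\<Phi> - F) lies in the fibre W^-1{D}. In finite dimension a square integrable family
G is a continuous frame exactly when its Gram matrix (\<integral> cj(g_i) g_j)_ij is nonsingular: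
the upper frame bound is automatic, and the lower one is the minimum of
v \<mapsto> \<integral> |<v, g_x>|^2 over the compact unit sphere. Along the line the Gram matrix is
quadratic in t, so its determinant is a polynomial in t which does not vanish at t = 1.
Having only finitely many roots, it is nonzero for arbitrarily small t > 0, and
F + t (\<Phi> - F) is then a frame close to F.\<close>

lemma norm_vec_power2: "(norm (x::'b::real_normed_vector^'n))\<^sup>2 = (\<Sum>i\<in>UNIV. (norm (x$i))\<^sup>2)"
  unfolding norm_vec_def L2_set_def by (simp add: sum_nonneg)

lemma det_eq_0_iff_vector_matrix_mult:
  fixes A :: "'a::field^'n^'n"
  shows "det A = 0 \<longleftrightarrow> (\<exists>v. v \<noteq> 0 \<and> v v* A = 0)"
proof -
  have "det A \<noteq> 0 \<longleftrightarrow> invertible (transpose A)"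
    by (simp add: invertible_det_nz)
  also have "\<dots> \<longleftrightarrow> (\<forall>v. v v* A = 0 \<longrightarrow> v = 0)"
    by (simp add: invertible_left_inverse matrix_left_invertible_ker)
  finally show ?thesis by blast
qed

lemma poly_det: "poly (det (A :: 'a::comm_ring_1 poly^'n^'n)) x = det (\<chi> i j. poly (A$i$j) x)"
  unfolding det_def by (simp add: poly_sum poly_prod)

lemma poly_nonzero_near_0:
  fixes p :: "'a::real_field poly"
  assumes "p \<noteq> 0" "\<delta> > 0"
  obtains t where "0 < t" "t < \<delta>" "poly p (of_real t) \<noteq> 0"
proof -
  have "finite (of_real -` {x. poly p x = 0} :: real set)"
    by (rule finite_vimageI[OF poly_roots_finite[OF assms(1)] inj_of_real])
  then have "\<not> {0<..<\<delta>} \<subseteq> of_real -` {x. poly p x = 0}"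
    using assms(2) infinite_Ioo finite_subset by blast
  then obtain t where "t \<in> {0<..<\<delta>}" "poly p (of_real t) \<noteq> 0" by blast
  with that show ?thesis by auto
qed

definition square_integrable :: "'a measure \<Rightarrow> ('a \<Rightarrow> 'b::real_normed_vector) \<Rightarrow> bool" where
  "square_integrable M f \<longleftrightarrow> (\<integral>\<^sup>+x. ennreal ((norm (f x))\<^sup>2) \<partial>M) < \<infinity>"

lemma square_integrable_add:
  assumes "square_integrable M f" "square_integrable M g"
    and [measurable]: "(\<lambda>x. norm (f x)) \<in> borel_measurable M" "(\<lambda>x. norm (g x)) \<in> borel_measurable M"
  shows "square_integrable M (\<lambda>x. f x + g x)"
proof -
  have "(\<integral>\<^sup>+x. ennreal ((norm (f x + g x))\<^sup>2) \<partial>M) \<le>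
      (\<integral>\<^sup>+x. ennreal (2 * (norm (f x))\<^sup>2) + ennreal (2 * (norm (g x))\<^sup>2) \<partial>M)"
  proof (rule nn_integral_mono)
    fix x
    have "(norm (f x + g x))\<^sup>2 \<le> (norm (f x) + norm (g x))\<^sup>2"
      by (simp add: norm_triangle_ineq power_mono)
    also have "\<dots> \<le> 2 * (norm (f x))\<^sup>2 + 2 * (norm (g x))\<^sup>2"
      using zero_le_power2[of "norm (f x) - norm (g x)"] unfolding power2_sum power2_diff by linarith
    finally show "ennreal ((norm (f x + g x))\<^sup>2) \<le> ennreal (2 * (norm (f x))\<^sup>2) + ennreal (2 * (norm (g x))\<^sup>2)"
      by (simp add: ennreal_plus[symmetric] del: ennreal_plus)
  qed
  also have "\<dots> = 2 * (\<integral>\<^sup>+x. ennreal ((norm (f x))\<^sup>2) \<partial>M) + 2 * (\<integral>\<^sup>+x. ennreal ((norm (g x))\<^sup>2) \<partial>M)"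
    by (simp add: nn_integral_add ennreal_mult nn_integral_cmult)
  also have "\<dots> < \<infinity>"
    using assms(1,2) unfolding square_integrable_def by (simp add: ennreal_mult_less_top less_top)
  finally show ?thesis unfolding square_integrable_def .
qed

lemma square_integrable_scaleR:
  assumes "square_integrable M f" "(\<lambda>x. norm (f x)) \<in> borel_measurable M"
  shows "square_integrable M (\<lambda>x. c *\<^sub>R f x)"
proof -
  have "(\<integral>\<^sup>+x. ennreal ((norm (c *\<^sub>R f x))\<^sup>2) \<partial>M) = ennreal (c\<^sup>2) * (\<integral>\<^sup>+x. ennreal ((norm (f x))\<^sup>2) \<partial>M)"
    using assms(2) by (simp add: power_mult_distrib ennreal_mult nn_integral_cmult)
  also have "\<dots> < \<infinity>"
    using assms(1) unfolding square_integrable_def by (simp add: ennreal_mult_less_top less_top)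
  finally show ?thesis unfolding square_integrable_def .
qed

lemma integrable_mult_square_integrable:
  fixes f g :: "'a \<Rightarrow> 'f::{real_normed_field,banach,second_countable_topology}"
  assumes "square_integrable M f" "square_integrable M g"
    and [measurable]: "f \<in> borel_measurable M" "g \<in> borel_measurable M"
  shows "integrable M (\<lambda>x. f x * g x)"
proof (rule integrableI_bounded)
  show "(\<lambda>x. f x * g x) \<in> borel_measurable M" by measurable
  have "(\<integral>\<^sup>+x. ennreal (norm (f x * g x)) \<partial>M) \<le>
      (\<integral>\<^sup>+x. ennreal ((norm (f x))\<^sup>2) + ennreal ((norm (g x))\<^sup>2) \<partial>M)"
  proof (rule nn_integral_mono)
    fix x
    have "norm (f x * g x) \<le> (norm (f x))\<^sup>2 + (norm (g x))\<^sup>2"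
      using zero_le_power2[of "norm (f x) - norm (g x)"] zero_le_power2[of "norm (f x)"]
        zero_le_power2[of "norm (g x)"]
      unfolding power2_diff norm_mult by linarith
    then show "ennreal (norm (f x * g x)) \<le> ennreal ((norm (f x))\<^sup>2) + ennreal ((norm (g x))\<^sup>2)"
      by (simp add: ennreal_plus[symmetric] del: ennreal_plus)
  qed
  also have "\<dots> < \<infinity>"
    using assms(1,2) unfolding square_integrable_def by (simp add: nn_integral_add)
  finally show "(\<integral>\<^sup>+x. ennreal (norm (f x * g x)) \<partial>M) < \<infinity>" .
qed

lemma L2vec_coord_measurable [measurable]: "F \<in> L2vec M \<Longrightarrow> (\<lambda>x. F x $ i) \<in> borel_measurable M"
  by (simp add: L2vec_def)

lemma L2vec_norm_measurable [measurable]: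
  assumes "F \<in> L2vec M" shows "(\<lambda>x. norm (F x)) \<in> borel_measurable M"
proof -
  have "(\<lambda>x. sqrt ((norm (F x))\<^sup>2)) \<in> borel_measurable M"
    using assms unfolding norm_vec_power2 by measurable
  then show ?thesis by simp
qed

lemma L2vec_square_integrable: "F \<in> L2vec M \<Longrightarrow> square_integrable M F"
  unfolding L2vec_def square_integrable_def by blast

lemma L2vec_coord_square_integrable:
  assumes "F \<in> L2vec M" shows "square_integrable M (\<lambda>x. F x $ i)"
proof -
  have "(\<integral>\<^sup>+x. ennreal ((norm (F x $ i))\<^sup>2) \<partial>M) \<le> (\<integral>\<^sup>+x. ennreal ((norm (F x))\<^sup>2) \<partial>M)"
    by (intro nn_integral_mono ennreal_leI power_mono) (auto intro: Finite_Cartesian_Product.norm_nth_le)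
  then show ?thesis using assms unfolding square_integrable_def L2vec_def by auto
qed

lemma L2vec_add: "F \<in> L2vec M \<Longrightarrow> G \<in> L2vec M \<Longrightarrow> (\<lambda>x. F x + G x) \<in> L2vec M"
  using square_integrable_add[of M F G] L2vec_square_integrable[of F M] L2vec_square_integrable[of G M]
    L2vec_norm_measurable[of F M] L2vec_norm_measurable[of G M]
  unfolding L2vec_def square_integrable_def by (auto intro: borel_measurable_add)

lemma L2vec_scaleR: "F \<in> L2vec M \<Longrightarrow> (\<lambda>x. c *\<^sub>R F x) \<in> L2vec M"
  using square_integrable_scaleR[of M F c] L2vec_square_integrable[of F M] L2vec_norm_measurable[of F M]
  unfolding L2vec_def square_integrable_def by (auto intro: borel_measurable_scaleR)

lemma L2vec_diff: "F \<in> L2vec M \<Longrightarrow> G \<in> L2vec M \<Longrightarrow> (\<lambda>x. F x - G x) \<in> L2vec M"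
  using L2vec_add[of F M "\<lambda>x. (-1) *\<^sub>R G x"] L2vec_scaleR[of G M "-1"] by simp

lemma L2vec_small_multiple:
  assumes "E \<in> L2vec M" "\<epsilon> > 0"
  obtains \<delta> where "\<delta> > 0"
    "\<And>t. 0 \<le> t \<Longrightarrow> t < \<delta> \<Longrightarrow> (\<integral>\<^sup>+x. ennreal ((norm (t *\<^sub>R E x))\<^sup>2) \<partial>M) < ennreal (\<epsilon>\<^sup>2)"
proof -
  obtain k where k: "(\<integral>\<^sup>+x. ennreal ((norm (E x))\<^sup>2) \<partial>M) = ennreal k" "0 \<le> k"
    using assms(1) unfolding L2vec_def by (cases "\<integral>\<^sup>+x. ennreal ((norm (E x))\<^sup>2) \<partial>M") auto
  show ?thesis
  proof (rule that[of "\<epsilon> / (k + 1)"])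
    show "\<epsilon> / (k + 1) > 0" using assms(2) k(2) by simp
    fix t :: real
    assume t: "0 \<le> t" "t < \<epsilon> / (k + 1)"
    have "(\<integral>\<^sup>+x. ennreal ((norm (t *\<^sub>R E x))\<^sup>2) \<partial>M) = ennreal (t\<^sup>2 * k)"
      using k assms(1) by (simp add: power_mult_distrib ennreal_mult nn_integral_cmult)
    also have "\<dots> < ennreal (\<epsilon>\<^sup>2)"
    proof (rule ennreal_lessI)
      have "t * (k + 1) < \<epsilon>" using t(2) k(2) by (simp add: pos_less_divide_eq)
      have "t\<^sup>2 * k \<le> (t * (k + 1))\<^sup>2"
        using k(2) by (simp add: power_mult_distrib power2_eq_square algebra_simps)
      also have "\<dots> < \<epsilon>\<^sup>2"
        using \<open>t * (k + 1) < \<epsilon>\<close> t(1) k(2) by (intro power_strict_mono) auto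
      finally show "t\<^sup>2 * k < \<epsilon>\<^sup>2" .
    qed (use assms(2) in simp)
    finally show "(\<integral>\<^sup>+x. ennreal ((norm (t *\<^sub>R E x))\<^sup>2) \<partial>M) < ennreal (\<epsilon>\<^sup>2)" .
  qed
qed

lemma set_integrable_Wmap:
  fixes h :: "'a \<Rightarrow> 'f::{real_normed_field,banach,second_countable_topology}"
  assumes "A \<in> sets M" "h \<in> L2scal M" "F \<in> L2vec M"
  shows "set_integrable M A (\<lambda>x. h x * F x $ i)"
  unfolding set_integrable_def using assms
  by (intro integrable_mult_indicator integrable_mult_square_integrable L2vec_coord_square_integrable)
    (auto simp: L2scal_def square_integrable_def)

lemma Wmap_lincomb:
  assumes "P j \<in> sets M" "h \<in> L2scal M" "F \<in> L2vec M" "G \<in> L2vec M"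
  shows "Wmap M P h (\<lambda>x. a *\<^sub>R F x + b *\<^sub>R G x) j = a *\<^sub>R Wmap M P h F j + b *\<^sub>R Wmap M P h G j"
proof -
  have "(LINT x:P j|M. h x * (a *\<^sub>R F x + b *\<^sub>R G x) $ i) =
      a *\<^sub>R (LINT x:P j|M. h x * F x $ i) + b *\<^sub>R (LINT x:P j|M. h x * G x $ i)" for i
  proof -
    have "(\<lambda>x. h x * (a *\<^sub>R F x + b *\<^sub>R G x) $ i) = (\<lambda>x. a *\<^sub>R (h x * F x $ i) + b *\<^sub>R (h x * G x $ i))"
      by (simp add: algebra_simps)
    then show ?thesis
      using set_integrable_Wmap[OF assms(1,2,3)] set_integrable_Wmap[OF assms(1,2,4)]
      by simp
  qed
  then show ?thesis by (simp add: Wmap_def vec_eq_iff)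
qed

lemma Wpre_affine_comb:
  assumes "\<forall>j<l. P j \<in> sets M" "h \<in> L2scal M" "F \<in> Wpre M P l h D" "\<Phi> \<in> Wpre M P l h D"
  shows "(\<lambda>x. (1 - t) *\<^sub>R F x + t *\<^sub>R \<Phi> x) \<in> Wpre M P l h D"
proof -
  have L2: "F \<in> L2vec M" "\<Phi> \<in> L2vec M" using assms(3,4) by (auto simp: Wpre_def)
  have "Wmap M P h (\<lambda>x. (1 - t) *\<^sub>R F x + t *\<^sub>R \<Phi> x) j = D j" if "j < l" for j
    using assms that Wmap_lincomb[of P j M h F \<Phi> "1 - t" t] L2 by (simp add: Wpre_def algebra_simps)
  then show ?thesis using L2 by (simp add: Wpre_def L2vec_add L2vec_scaleR)
qed

definition frame_form :: "('f::{real_normed_field,banach,second_countable_topology} \<Rightarrow> 'f) \<Rightarrow>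
    'a measure \<Rightarrow> ('a \<Rightarrow> 'f^'n) \<Rightarrow> 'f^'n \<Rightarrow> real" where
  "frame_form cj M G v = (LINT x|M. (norm (fn_inner cj v (G x)))\<^sup>2)"

definition gram :: "('f::{real_normed_field,banach,second_countable_topology} \<Rightarrow> 'f) \<Rightarrow>
    'a measure \<Rightarrow> ('a \<Rightarrow> 'f^'n) \<Rightarrow> ('a \<Rightarrow> 'f^'n) \<Rightarrow> 'f^'n^'n" where
  "gram cj M U V = (\<chi> i j. LINT x|M. cj (U x $ i) * V x $ j)"

locale conjugation =
  fixes cj :: "'f::{real_normed_field,banach,second_countable_topology,heine_borel} \<Rightarrow> 'f"
  assumes cj_add: "cj (a + b) = cj a + cj b"
    and cj_mult: "cj (a * b) = cj a * cj b"
    and cj_of_real: "cj (of_real r) = of_real r"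
    and cj_norm: "norm (cj a) = norm a"
    and cj_cj: "cj (cj a) = a"
    and mult_cj: "a * cj a = of_real ((norm a)\<^sup>2)"
begin

lemma cj_0 [simp]: "cj 0 = 0"
  using cj_of_real[of 0] by simp

lemma cj_diff: "cj (a - b) = cj a - cj b"
  using cj_add[of "a - b" b] by (simp add: algebra_simps)

lemma cj_sum: "cj (sum f A) = (\<Sum>i\<in>A. cj (f i))"
  by (induction A rule: infinite_finite_induct) (auto simp: cj_add)

lemma cj_scaleR: "cj (r *\<^sub>R a) = r *\<^sub>R cj a"
  by (simp add: scaleR_conv_of_real cj_mult cj_of_real)

lemma continuous_on_cj: "continuous_on UNIV cj"
proof -
  have "dist (cj x) (cj y) = dist x y" for x y
    by (simp add: dist_norm cj_diff[symmetric] cj_norm)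
  then show ?thesis by (metis continuous_on_iff)
qed

lemma cj_measurable [measurable]: "f \<in> borel_measurable M \<Longrightarrow> (\<lambda>x. cj (f x)) \<in> borel_measurable M"
  by (rule borel_measurable_continuous_on[OF continuous_on_cj])

lemma continuous_on_cj_compose [continuous_intros]:
  "continuous_on S f \<Longrightarrow> continuous_on S (\<lambda>x. cj (f x))"
  by (rule continuous_on_compose2[OF continuous_on_cj]) auto

lemma cj_fn_inner: "cj (fn_inner cj v w) = (\<Sum>j\<in>UNIV. cj (v $ j) * w $ j)"
  unfolding fn_inner_def by (simp add: cj_sum cj_mult cj_cj)

lemma fn_inner_scaleR_left: "fn_inner cj (c *\<^sub>R u) w = c *\<^sub>R fn_inner cj u w"
  unfolding fn_inner_def by (simp add: scaleR_sum_right)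

lemma norm_fn_inner_le: "norm (fn_inner cj v w) \<le> real CARD('n) * norm (v::'f^'n) * norm w"
proof -
  have "norm (fn_inner cj v w) \<le> (\<Sum>i\<in>UNIV. norm (v $ i * cj (w $ i)))"
    unfolding fn_inner_def by (rule norm_sum)
  also have "\<dots> \<le> (\<Sum>i\<in>(UNIV::'n set). norm v * norm w)"
    by (intro sum_mono)
      (auto simp: norm_mult cj_norm intro!: mult_mono Finite_Cartesian_Product.norm_nth_le)
  finally show ?thesis by simp
qed

lemma fn_inner_measurable [measurable]:
  "G \<in> L2vec M \<Longrightarrow> (\<lambda>x. fn_inner cj v (G x)) \<in> borel_measurable M"
  unfolding fn_inner_def by measurable

lemma square_integrable_cj: "square_integrable M f \<Longrightarrow> square_integrable M (\<lambda>x. cj (f x))"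
  by (simp add: square_integrable_def cj_norm)

lemma square_integrable_fn_inner:
  assumes "G \<in> L2vec M" shows "square_integrable M (\<lambda>x. fn_inner cj (v::'f^'n) (G x))"
proof -
  let ?C = "real CARD('n) * norm v"
  have "(\<integral>\<^sup>+x. ennreal ((norm (fn_inner cj v (G x)))\<^sup>2) \<partial>M) \<le>
      (\<integral>\<^sup>+x. ennreal (?C\<^sup>2) * ennreal ((norm (G x))\<^sup>2) \<partial>M)"
  proof (rule nn_integral_mono)
    fix x
    have "(norm (fn_inner cj v (G x)))\<^sup>2 \<le> (?C * norm (G x))\<^sup>2"
      using norm_fn_inner_le[of v "G x"] by (intro power_mono) auto
    then show "ennreal ((norm (fn_inner cj v (G x)))\<^sup>2) \<le> ennreal (?C\<^sup>2) * ennreal ((norm (G x))\<^sup>2)"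
      by (simp add: ennreal_mult[symmetric] power_mult_distrib del: ennreal_mult)
  qed
  also have "\<dots> = ennreal (?C\<^sup>2) * (\<integral>\<^sup>+x. ennreal ((norm (G x))\<^sup>2) \<partial>M)"
    using assms by (intro nn_integral_cmult) auto
  also have "\<dots> < \<infinity>"
    using assms unfolding L2vec_def by (simp add: ennreal_mult_less_top less_top)
  finally show ?thesis unfolding square_integrable_def .
qed

lemma integrable_gram_entry:
  "U \<in> L2vec M \<Longrightarrow> V \<in> L2vec M \<Longrightarrow> integrable M (\<lambda>x. cj (U x $ i) * V x $ j)"
  by (intro integrable_mult_square_integrable square_integrable_cj L2vec_coord_square_integrable) auto

lemma integral_fn_inner_mult_coord:
  assumes "G \<in> L2vec M"
  shows "(LINT x|M. fn_inner cj v (G x) * G x $ j) = (v v* gram cj M G G) $ j"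
proof -
  have "(LINT x|M. fn_inner cj v (G x) * G x $ j) = (LINT x|M. (\<Sum>i\<in>UNIV. v $ i * (cj (G x $ i) * G x $ j)))"
    unfolding fn_inner_def by (simp add: sum_distrib_right mult.assoc)
  also have "\<dots> = (\<Sum>i\<in>UNIV. LINT x|M. v $ i * (cj (G x $ i) * G x $ j))"
    using assms by (intro Bochner_Integration.integral_sum integrable_mult_right integrable_gram_entry)
  also have "\<dots> = (\<Sum>i\<in>UNIV. v $ i * (LINT x|M. cj (G x $ i) * G x $ j))"
    by (simp add: integral_mult_right_zero)
  finally show ?thesis by (simp add: vector_matrix_mult_def gram_def)
qed

lemma integrable_frame_form:
  assumes "G \<in> L2vec M" shows "integrable M (\<lambda>x. (norm (fn_inner cj v (G x)))\<^sup>2)"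
proof -
  have "integrable M (\<lambda>x. norm (fn_inner cj v (G x) * cj (fn_inner cj v (G x))))"
    using assms
    by (intro integrable_norm integrable_mult_square_integrable square_integrable_fn_inner
        square_integrable_cj) auto
  then show ?thesis by (simp add: norm_mult cj_norm power2_eq_square)
qed

lemma nn_integral_eq_frame_form:
  assumes "G \<in> L2vec M"
  shows "(\<integral>\<^sup>+x. ennreal ((norm (fn_inner cj v (G x)))\<^sup>2) \<partial>M) = ennreal (frame_form cj M G v)"
  unfolding frame_form_def using assms by (intro nn_integral_eq_integral integrable_frame_form) auto

lemma frame_form_nonneg: "frame_form cj M G v \<ge> 0"
  unfolding frame_form_def by (rule integral_nonneg_AE) auto

lemma frame_form_scaleR: "frame_form cj M G (c *\<^sub>R u) = c\<^sup>2 * frame_form cj M G u"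
  unfolding frame_form_def fn_inner_scaleR_left by (simp add: power_mult_distrib)

lemma of_real_frame_form:
  assumes "G \<in> L2vec M"
  shows "of_real (frame_form cj M G v) = (\<Sum>j\<in>UNIV. cj (v $ j) * (v v* gram cj M G G) $ j)"
proof -
  have "of_real (frame_form cj M G v) = (LINT x|M. (of_real ((norm (fn_inner cj v (G x)))\<^sup>2) :: 'f))"
    unfolding frame_form_def
    by (rule integral_bounded_linear[OF bounded_linear_of_real integrable_frame_form[OF assms], symmetric])
  also have "\<dots> = (LINT x|M. (\<Sum>j\<in>UNIV. cj (v $ j) * (fn_inner cj v (G x) * G x $ j)))"
    unfolding mult_cj[symmetric] cj_fn_inner by (simp add: sum_distrib_left mult.assoc mult.left_commute)
  also have "\<dots> = (\<Sum>j\<in>UNIV. LINT x|M. cj (v $ j) * (fn_inner cj v (G x) * G x $ j))"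
    using assms
    by (intro Bochner_Integration.integral_sum integrable_mult_right integrable_mult_square_integrable
        square_integrable_fn_inner L2vec_coord_square_integrable) auto
  also have "\<dots> = (\<Sum>j\<in>UNIV. cj (v $ j) * (v v* gram cj M G G) $ j)"
    using assms by (simp add: integral_mult_right_zero integral_fn_inner_mult_coord)
  finally show ?thesis .
qed

lemma frame_form_pos:
  assumes G: "G \<in> L2vec M" and "det (gram cj M G G) \<noteq> 0" and "v \<noteq> 0"
  shows "frame_form cj M G v > 0"
proof (rule ccontr)
  assume "\<not> ?thesis"
  then have "frame_form cj M G v = 0" using frame_form_nonneg[of M G v] by linarith
  then have "AE x in M. (norm (fn_inner cj v (G x)))\<^sup>2 = 0"
    unfolding frame_form_def using integrable_frame_form[OF G]
    by (subst (asm) integral_nonneg_eq_0_iff_AE) auto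
  then have "AE x in M. fn_inner cj v (G x) * G x $ j = 0" for j by eventually_elim simp
  then have "(v v* gram cj M G G) $ j = 0" for j
    unfolding integral_fn_inner_mult_coord[OF G, symmetric] by (rule integral_eq_zero_AE)
  then have "v v* gram cj M G G = 0" by (simp add: vec_eq_iff)
  with assms(2,3) show False using det_eq_0_iff_vector_matrix_mult by blast
qed

lemma continuous_on_frame_form:
  assumes "G \<in> L2vec M" shows "continuous_on UNIV (frame_form cj M G)"
proof -
  have "frame_form cj M G v = norm (\<Sum>j\<in>UNIV. cj (v $ j) * (\<Sum>i\<in>UNIV. v $ i * gram cj M G G $ i $ j))" for v
    using of_real_frame_form[OF assms, of v, symmetric] frame_form_nonneg[of M G v]
    by (simp add: vector_matrix_mult_def)
  then have "frame_form cj M G = (\<lambda>v. norm (\<Sum>j\<in>UNIV. cj (v $ j) * (\<Sum>i\<in>UNIV. v $ i * gram cj M G G $ i $ j)))"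
    by blast
  then show ?thesis by (simp add: continuous_intros)
qed

lemma cont_frame_if_frame_form_pos:
  assumes G: "G \<in> L2vec M" and pos: "\<And>v. v \<noteq> 0 \<Longrightarrow> frame_form cj M G v > 0"
  shows "cont_frame cj M (G :: 'a \<Rightarrow> 'f^'n)"
proof -
  let ?S = "sphere (0::'f^'n) 1"
  have cont: "continuous_on ?S (frame_form cj M G)"
    using continuous_on_frame_form[OF G] by (rule continuous_on_subset) auto
  obtain a where a: "a \<in> ?S" "\<And>u. u \<in> ?S \<Longrightarrow> frame_form cj M G a \<le> frame_form cj M G u"
    using continuous_attains_inf[OF compact_sphere _ cont] by auto
  obtain b where b: "b \<in> ?S" "\<And>u. u \<in> ?S \<Longrightarrow> frame_form cj M G u \<le> frame_form cj M G b"
    using continuous_attains_sup[OF compact_sphere _ cont] by auto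
  define A where "A = frame_form cj M G a"
  define B where "B = frame_form cj M G b"
  have "A > 0" unfolding A_def using a(1) by (intro pos) auto
  have "A \<le> B" unfolding A_def B_def using a b by blast
  have bounds: "A * (norm v)\<^sup>2 \<le> frame_form cj M G v \<and> frame_form cj M G v \<le> B * (norm v)\<^sup>2" for v
  proof (cases "v = 0")
    case True then show ?thesis by (simp add: frame_form_def fn_inner_def)
  next
    case False
    define u where "u = (1 / norm v) *\<^sub>R v"
    have "u \<in> ?S" using False by (simp add: u_def)
    then have "A \<le> frame_form cj M G u" "frame_form cj M G u \<le> B"
      using a b unfolding A_def B_def by auto
    moreover have "frame_form cj M G v = (norm v)\<^sup>2 * frame_form cj M G u"
      using False by (simp add: u_def frame_form_scaleR field_simps power2_eq_square)
    ultimately show ?thesis by (simp add: mult.commute mult_right_mono)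
  qed
  show ?thesis
    unfolding cont_frame_def nn_integral_eq_frame_form[OF G]
    using G \<open>A > 0\<close> \<open>A \<le> B\<close> bounds by (auto intro: ennreal_leI)
qed

lemma cont_frame_iff_det_gram:
  assumes G: "G \<in> L2vec M"
  shows "cont_frame cj M G \<longleftrightarrow> det (gram cj M G G) \<noteq> 0"
proof
  assume frame: "cont_frame cj M G"
  show "det (gram cj M G G) \<noteq> 0"
  proof
    assume "det (gram cj M G G) = 0"
    then obtain v where "v \<noteq> 0" "v v* gram cj M G G = 0"
      using det_eq_0_iff_vector_matrix_mult by blast
    then have "frame_form cj M G v = 0"
      using of_real_frame_form[OF G, of v] by simp
    moreover obtain A where "A > 0" "ennreal (A * (norm v)\<^sup>2) \<le> ennreal (frame_form cj M G v)"
      using frame unfolding cont_frame_def nn_integral_eq_frame_form[OF G] by blast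
    ultimately show False using \<open>v \<noteq> 0\<close> by (simp add: ennreal_le_iff2 zero_less_mult_iff)
  qed
next
  assume "det (gram cj M G G) \<noteq> 0"
  then show "cont_frame cj M G"
    using G by (intro cont_frame_if_frame_form_pos frame_form_pos)
qed

lemma gram_line:
  assumes F: "F \<in> L2vec M" and E: "E \<in> L2vec M"
  shows "gram cj M (\<lambda>x. F x + t *\<^sub>R E x) (\<lambda>x. F x + t *\<^sub>R E x) $ i $ j =
    gram cj M F F $ i $ j + t *\<^sub>R (gram cj M F E $ i $ j + gram cj M E F $ i $ j) + t\<^sup>2 *\<^sub>R gram cj M E E $ i $ j"
proof -
  define a where "a x = cj (F x $ i) * F x $ j" for x
  define b where "b x = cj (F x $ i) * E x $ j" for x
  define c where "c x = cj (E x $ i) * F x $ j" for x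
  define d where "d x = cj (E x $ i) * E x $ j" for x
  have int: "integrable M a" "integrable M b" "integrable M c" "integrable M d"
    unfolding a_def b_def c_def d_def using F E by (auto intro!: integrable_gram_entry)
  have "cj ((F x + t *\<^sub>R E x) $ i) * (F x + t *\<^sub>R E x) $ j = a x + t *\<^sub>R (b x + c x) + t\<^sup>2 *\<^sub>R d x" for x
    unfolding a_def b_def c_def d_def
    by (simp only: vector_add_component vector_scaleR_component cj_add cj_scaleR)
      (simp add: scaleR_conv_of_real algebra_simps power2_eq_square)
  then have "gram cj M (\<lambda>x. F x + t *\<^sub>R E x) (\<lambda>x. F x + t *\<^sub>R E x) $ i $ j =
      (LINT x|M. a x + t *\<^sub>R (b x + c x) + t\<^sup>2 *\<^sub>R d x)"
    by (simp add: gram_def)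
  also have "\<dots> = (LINT x|M. a x) + t *\<^sub>R ((LINT x|M. b x) + (LINT x|M. c x)) + t\<^sup>2 *\<^sub>R (LINT x|M. d x)"
    using int by simp
  finally show ?thesis unfolding gram_def vec_lambda_beta a_def b_def c_def d_def .
qed

lemma det_gram_line_poly:
  assumes "F \<in> L2vec M" "E \<in> L2vec M"
  obtains p where
    "\<And>t. det (gram cj M (\<lambda>x. F x + t *\<^sub>R E x) (\<lambda>x. F x + t *\<^sub>R E x)) = poly p (of_real t)"
proof -
  let ?P = "\<chi> i j. [: gram cj M F F $ i $ j, gram cj M F E $ i $ j + gram cj M E F $ i $ j,
    gram cj M E E $ i $ j :]"
  have gram_eq: "gram cj M (\<lambda>x. F x + t *\<^sub>R E x) (\<lambda>x. F x + t *\<^sub>R E x) =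
      (\<chi> i j. poly (?P $ i $ j) (of_real t))" for t
    unfolding vec_eq_iff vec_lambda_beta gram_line[OF assms]
    by (simp add: scaleR_conv_of_real algebra_simps power2_eq_square)
  show ?thesis
    by (rule that[of "det ?P"]) (simp only: gram_eq poly_det)
qed

lemma L2_dense_in_frames_Wpre:
  assumes P: "\<forall>j<l. P j \<in> sets M" and h: "h \<in> L2scal M"
    and \<Phi>: "\<Phi> \<in> Wpre M P l h D" "cont_frame cj M \<Phi>"
  shows "L2_dense_in M ({\<Psi>. cont_frame cj M \<Psi>} \<inter> Wpre M P l h D) (Wpre M P l h D)"
  unfolding L2_dense_in_def
proof (intro conjI ballI allI impI)
  fix F and \<epsilon> :: real
  assume F: "F \<in> Wpre M P l h D" and "\<epsilon> > 0"
  define E where "E x = \<Phi> x - F x" for x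
  have L2: "F \<in> L2vec M" "E \<in> L2vec M"
    using F \<Phi>(1) unfolding E_def by (auto simp: Wpre_def intro: L2vec_diff)
  obtain p where p: "\<And>t. det (gram cj M (\<lambda>x. F x + t *\<^sub>R E x) (\<lambda>x. F x + t *\<^sub>R E x)) = poly p (of_real t)"
    using det_gram_line_poly[OF L2] by blast
  have "(\<lambda>x. F x + 1 *\<^sub>R E x) = \<Phi>" by (simp add: E_def)
  then have "p \<noteq> 0"
    using p[of 1] \<Phi> cont_frame_iff_det_gram by (force simp: Wpre_def)
  obtain \<delta> where "\<delta> > 0" and \<delta>:
    "\<And>t. 0 \<le> t \<Longrightarrow> t < \<delta> \<Longrightarrow> (\<integral>\<^sup>+x. ennreal ((norm (t *\<^sub>R E x))\<^sup>2) \<partial>M) < ennreal (\<epsilon>\<^sup>2)"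
    using L2vec_small_multiple[OF L2(2) \<open>\<epsilon> > 0\<close>] by blast
  then obtain t where t: "0 < t" "t < \<delta>" "poly p (of_real t) \<noteq> 0"
    using poly_nonzero_near_0[OF \<open>p \<noteq> 0\<close>] by blast
  define G where "G x = F x + t *\<^sub>R E x" for x
  have "G = (\<lambda>x. (1 - t) *\<^sub>R F x + t *\<^sub>R \<Phi> x)"
    by (auto simp: G_def E_def algebra_simps)
  then have "G \<in> Wpre M P l h D"
    using Wpre_affine_comb[OF P h F \<Phi>(1)] by simp
  moreover have "cont_frame cj M G"
    using t(3) p[of t] cont_frame_iff_det_gram[of G M] \<open>G \<in> Wpre M P l h D\<close>
    by (simp add: G_def[abs_def] Wpre_def)
  moreover have "(\<integral>\<^sup>+x. ennreal ((norm (F x - G x))\<^sup>2) \<partial>M) < ennreal (\<epsilon>\<^sup>2)"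
    using \<delta>[of t] t by (simp add: G_def)
  ultimately show "\<exists>G\<in>{\<Psi>. cont_frame cj M \<Psi>} \<inter> Wpre M P l h D.
      (\<integral>\<^sup>+x. ennreal ((norm (F x - G x))\<^sup>2) \<partial>M) < ennreal (\<epsilon>\<^sup>2)"
    by blast
qed auto

end

interpretation real_conjugation: conjugation "id :: real \<Rightarrow> real"
  by unfold_locales (auto simp: power2_eq_square)

interpretation complex_conjugation: conjugation cnj
  by unfold_locales (auto simp: complex_norm_square simp del: of_real_power)

theorem corollary6p3:
  fixes M :: "'a measure" and P :: "nat \<Rightarrow> 'a set" and l :: nat
  assumes "l \<ge> 1"
    and "\<forall>j<l. P j \<in> sets M"
    and "\<forall>j<l. \<forall>k<l. j \<noteq> k \<longrightarrow> P j \<inter> P k = {}"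
    and "(\<Union>j<l. P j) = space M"
  shows "(\<forall>(h::'a \<Rightarrow> real) (D::nat \<Rightarrow> real^'n).
            h \<in> L2scal M \<and> (\<exists>\<Phi>\<in>Wpre M P l h D. cont_frame id M \<Phi>) \<longrightarrow>
            L2_dense_in M ({\<Phi>. cont_frame id M \<Phi>} \<inter> Wpre M P l h D) (Wpre M P l h D))
       \<and> (\<forall>(h::'a \<Rightarrow> complex) (D::nat \<Rightarrow> complex^'n).
            h \<in> L2scal M \<and> (\<exists>\<Phi>\<in>Wpre M P l h D. cont_frame cnj M \<Phi>) \<longrightarrow>
            L2_dense_in M ({\<Phi>. cont_frame cnj M \<Phi>} \<inter> Wpre M P l h D) (Wpre M P l h D))"
  using real_conjugation.L2_dense_in_frames_Wpre[OF assms(2)]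
    complex_conjugation.L2_dense_in_frames_Wpre[OF assms(2)]
  by blast

end
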